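(* Let $u,v$ be two different essential vertices of a multigraph $H$, and let $P$ be any simple path in $H$ from $u$ to $v$. Then every edge traversed by $P$ is essential.
   Context: Multigraphs are undirected and may contain parallel edges and self-loops (a self-loop is a cycle of length one, two parallel edges form a cycle of length two). An edge $e$ of $H$ is essential if it lies on a cycle of $H$, or it is a bridge whose removal creates two new connected components each containing a cycle. An incidence is a pair $(u,e)$ with $e$ incident to $u$, a self-loop at $u$ giving two incidences. A vertex is essential if it participates in at least three incidences with essential edges. *)

theory Defs
  imports Main
begin

text \<open>A finite multigraph: vertex set V, edge set E (edges are abstract objects of type 'e,
  so parallel edges are allowed), and an endpoint map; ends e = {x,y} with x \<noteq> y for
  an ordinary edge, ends e = {x} for a self-loop at x.\<close>

definition multigraph :: "'v set \<Rightarrow> 'e set \<Rightarrow> ('e \<Rightarrow> 'v set) \<Rightarrow> bool" where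
  "multigraph V E ends \<longleftrightarrow> finite V \<and> finite E \<and>
     (\<forall>e\<in>E. ends e \<noteq> {} \<and> ends e \<subseteq> V \<and> card (ends e) \<le> 2)"

text \<open>A cycle of length n \<ge> 1: distinct vertices vs!0..vs!(n-1), distinct edges, edge i joins
  vs!i and vs!((i+1) mod n). n = 1 is a self-loop, n = 2 a pair of parallel edges.\<close>

definition is_cycle :: "'e set \<Rightarrow> ('e \<Rightarrow> 'v set) \<Rightarrow> 'v list \<Rightarrow> 'e list \<Rightarrow> bool" where
  "is_cycle E ends vs es \<longleftrightarrow> es \<noteq> [] \<and> length vs = length es \<and> distinct vs \<and> distinct es \<and>
     set es \<subseteq> E \<and>
     (\<forall>i<length es. ends (es ! i) = {vs ! i, vs ! ((i + 1) mod length es)})"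

definition on_cycle :: "'e set \<Rightarrow> ('e \<Rightarrow> 'v set) \<Rightarrow> 'e \<Rightarrow> bool" where
  "on_cycle E ends e \<longleftrightarrow> (\<exists>vs es. is_cycle E ends vs es \<and> e \<in> set es)"

inductive reach :: "'e set \<Rightarrow> ('e \<Rightarrow> 'v set) \<Rightarrow> 'v \<Rightarrow> 'v \<Rightarrow> bool"
  for E ends where
  reach_refl: "reach E ends x x"
| reach_step: "reach E ends x y \<Longrightarrow> e \<in> E \<Longrightarrow> ends e = {y, z} \<Longrightarrow> reach E ends x z"

definition component_has_cycle :: "'e set \<Rightarrow> ('e \<Rightarrow> 'v set) \<Rightarrow> 'v \<Rightarrow> bool" where
  "component_has_cycle E ends x \<longleftrightarrow>
     (\<exists>vs es. is_cycle E ends vs es \<and> (\<forall>w\<in>set vs. reach E ends x w))"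

definition essential_edge :: "'e set \<Rightarrow> ('e \<Rightarrow> 'v set) \<Rightarrow> 'e \<Rightarrow> bool" where
  "essential_edge E ends e \<longleftrightarrow> e \<in> E \<and>
     (on_cycle E ends e \<or>
      (\<exists>x y. x \<noteq> y \<and> ends e = {x, y} \<and> \<not> reach (E - {e}) ends x y \<and>
             component_has_cycle (E - {e}) ends x \<and> component_has_cycle (E - {e}) ends y))"

definition essential_incidences :: "'e set \<Rightarrow> ('e \<Rightarrow> 'v set) \<Rightarrow> 'v \<Rightarrow> nat" where
  "essential_incidences E ends u =
     (\<Sum>e\<in>{e\<in>E. essential_edge E ends e \<and> u \<in> ends e}. if ends e = {u} then 2 else 1)"

definition essential_vertex :: "'v set \<Rightarrow> 'e set \<Rightarrow> ('e \<Rightarrow> 'v set) \<Rightarrow> 'v \<Rightarrow> bool" where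
  "essential_vertex V E ends u \<longleftrightarrow> u \<in> V \<and> essential_incidences E ends u \<ge> 3"

definition simple_path :: "'e set \<Rightarrow> ('e \<Rightarrow> 'v set) \<Rightarrow> 'v list \<Rightarrow> 'e list \<Rightarrow> 'v \<Rightarrow> 'v \<Rightarrow> bool" where
  "simple_path E ends vs es u v \<longleftrightarrow> vs \<noteq> [] \<and> length vs = length es + 1 \<and> distinct vs \<and>
     hd vs = u \<and> last vs = v \<and> set es \<subseteq> E \<and>
     (\<forall>i<length es. ends (es ! i) = {vs ! i, vs ! (i + 1)})"

end

theory Submission
  imports Defs
begin

text \<open>Let e be an edge of the path, joining x (on the side of u) to y. If e lies on a
  cycle it is essential. Otherwise e is a bridge, and it remains to show that the component
  of x in H - e contains a cycle (and symmetrically for y). If it did not, no edge f \<noteq> e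
  at u could be essential: f lies in that acyclic component, so it is on no cycle; and if f
  were a bridge with a cycle on each side, both sides could reach their cycles only through
  e, so they would be connected through e in H - f. Hence u would have at most one
  essential incidence, contradicting that u is essential.\<close>

lemma reach_trans:
  assumes "reach E ends x y" "reach E ends y z"
  shows "reach E ends x z"
  using assms(2,1) by (induction rule: reach.induct) (auto intro: reach.intros)

lemma reach_edge:
  assumes "e \<in> E" "ends e = {a, b}"
  shows "reach E ends a b"
  using assms by (blast intro: reach.intros)

lemma reach_sym:
  assumes "reach E ends x y"
  shows "reach E ends y x"
  using assms
proof (induction rule: reach.induct)
  case (reach_refl x)
  show ?case by (rule reach.reach_refl)
next
  case (reach_step x y e z)
  have "reach E ends z y"
    using reach_edge[of e E ends z y] reach_step.hyps by (simp add: insert_commute)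
  then show ?case using reach_step.IH by (rule reach_trans)
qed

lemma reach_mono:
  assumes "reach E ends x y" "E \<subseteq> E'"
  shows "reach E' ends x y"
  using assms by (induction rule: reach.induct) (auto intro: reach.intros)

lemma reach_Diff_or_reach_ends:
  assumes "reach E ends x w"
  shows "reach (E - {e}) ends x w \<or> (\<exists>z\<in>ends e. reach E ends x z)"
  using assms
proof (induction rule: reach.induct)
  case (reach_refl x)
  show ?case by (auto intro: reach.intros)
next
  case (reach_step x y g z)
  show ?case
  proof (cases "reach (E - {e}) ends x y")
    case True
    then show ?thesis
      using reach_step.hyps by (cases "g = e") (blast intro: reach.reach_step)+
  next
    case False
    then show ?thesis using reach_step.IH by blast
  qed
qed

lemma reach_along_edges:
  assumes "\<And>k. lo \<le> k \<Longrightarrow> k < hi \<Longrightarrow> es ! k \<in> E \<and> ends (es ! k) = {vs ! k, vs ! Suc k}"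
    and "lo \<le> j" "j \<le> hi"
  shows "reach E ends (vs ! lo) (vs ! j)"
  using assms(2,3)
proof (induction j rule: dec_induct)
  case base
  show ?case by (rule reach.reach_refl)
next
  case (step k)
  then show ?case using assms(1)[of k] by (auto intro: reach.reach_step)
qed

lemma cycle_vertices_reach:
  assumes "is_cycle E ends cvs ces" "w \<in> set cvs" "w' \<in> set cvs"
  shows "reach E ends w w'"
proof -
  have from_first: "reach E ends (cvs ! 0) (cvs ! k)" if "k < length cvs" for k
  proof (rule reach_along_edges[where es = ces and hi = "length cvs - 1"])
    fix j assume "j < length cvs - 1"
    then show "ces ! j \<in> E \<and> ends (ces ! j) = {cvs ! j, cvs ! Suc j}"
      using assms(1) unfolding is_cycle_def by auto
  qed (use that in auto)
  obtain i j where "i < length cvs" "cvs ! i = w" "j < length cvs" "cvs ! j = w'"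
    using assms(2,3) by (metis in_set_conv_nth)
  then show ?thesis using from_first reach_sym reach_trans by metis
qed

lemma cycle_edge_ends_in_cycle:
  assumes "is_cycle E ends cvs ces" "f \<in> set ces" "u \<in> ends f"
  shows "u \<in> set cvs"
proof -
  obtain i where i: "i < length ces" "ces ! i = f"
    using assms(2) by (metis in_set_conv_nth)
  with assms(1) have "ends f = {cvs ! i, cvs ! ((i + 1) mod length ces)}" "length cvs = length ces"
    unfolding is_cycle_def by auto
  moreover have "(i + 1) mod length ces < length ces" using i(1) by (intro mod_less_divisor) linarith
  ultimately show ?thesis using i assms(3) by (auto intro!: nth_mem)
qed

lemma is_cycle_mono:
  assumes "is_cycle E ends cvs ces" "E \<subseteq> E'"
  shows "is_cycle E' ends cvs ces"
  using assms unfolding is_cycle_def by auto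

lemma is_cycle_Diff_non_cycle_edge:
  assumes "is_cycle E ends cvs ces" "\<not> on_cycle E ends e"
  shows "is_cycle (E - {e}) ends cvs ces"
proof -
  have "e \<notin> set ces" using assms unfolding on_cycle_def by blast
  then show ?thesis using assms(1) unfolding is_cycle_def by auto
qed

lemma component_has_cycleI:
  assumes "is_cycle E ends cvs ces" "w \<in> set cvs" "reach E ends x w"
  shows "component_has_cycle E ends x"
proof -
  have "\<forall>w'\<in>set cvs. reach E ends x w'"
    using assms cycle_vertices_reach reach_trans by metis
  then show ?thesis unfolding component_has_cycle_def using assms(1) by blast
qed

lemma component_has_cycle_reach:
  assumes "reach E ends x y" "component_has_cycle E ends y"
  shows "component_has_cycle E ends x"
proof -
  obtain cvs ces where "is_cycle E ends cvs ces" "\<forall>w\<in>set cvs. reach E ends y w"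
    using assms(2) unfolding component_has_cycle_def by blast
  then show ?thesis
    unfolding component_has_cycle_def using reach_trans[OF assms(1)] by blast
qed

lemma simple_path_distinct_edges:
  assumes "simple_path E ends vs es x y"
  shows "distinct es"
  unfolding distinct_conv_nth
proof (intro allI impI)
  fix i j assume ij: "i < length es" "j < length es" "i \<noteq> j"
  have "length vs = length es + 1" "distinct vs"
    "ends (es ! i) = {vs ! i, vs ! Suc i}" "ends (es ! j) = {vs ! j, vs ! Suc j}"
    using assms ij unfolding simple_path_def by auto
  then show "es ! i \<noteq> es ! j"
    using ij by (auto simp: doubleton_eq_iff nth_eq_iff_index_eq)
qed

lemma simple_path_take:
  assumes "simple_path E ends vs es x y" "k < length vs"
  shows "simple_path E ends (take (Suc k) vs) (take k es) x (vs ! k)"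
proof -
  have "hd (take (Suc k) vs) = hd vs" by (simp add: hd_take)
  moreover have "last (take (Suc k) vs) = vs ! k"
    using assms(2) by (simp add: take_Suc_conv_app_nth)
  moreover have "set (take k es) \<subseteq> set es" by (rule set_take_subset)
  ultimately show ?thesis
    using assms unfolding simple_path_def by (auto simp: min_def)
qed

lemma simple_path_snoc:
  assumes "simple_path E ends vs es x y" "z \<notin> set vs" "g \<in> E" "ends g = {y, z}"
  shows "simple_path E ends (vs @ [z]) (es @ [g]) x z"
proof -
  have "vs ! length es = y"
    using assms(1) unfolding simple_path_def by (metis add_diff_cancel_right' last_conv_nth)
  then show ?thesis
    using assms unfolding simple_path_def by (auto simp: nth_append less_Suc_eq)
qed

lemma reach_imp_simple_path:
  assumes "reach E ends x y"
  shows "\<exists>vs es. simple_path E ends vs es x y"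
  using assms
proof (induction rule: reach.induct)
  case (reach_refl x)
  have "simple_path E ends [x] [] x x" unfolding simple_path_def by simp
  then show ?case by blast
next
  case (reach_step x y g z)
  then obtain vs es where p: "simple_path E ends vs es x y" by blast
  show ?case
  proof (cases "z \<in> set vs")
    case True
    then obtain k where "k < length vs" "vs ! k = z" by (metis in_set_conv_nth)
    then show ?thesis using simple_path_take[OF p] by metis
  next
    case False
    then show ?thesis using simple_path_snoc[OF p _ reach_step.hyps(2,3)] by blast
  qed
qed

lemma simple_path_close_cycle:
  assumes "simple_path (E - {e}) ends vs es x y" "x \<noteq> y" "e \<in> E" "ends e = {x, y}"
  shows "is_cycle E ends vs (es @ [e])"
proof -
  have "vs ! 0 = x" "vs ! length es = y" "length vs = length es + 1"
    using assms(1) unfolding simple_path_def by (auto simp: hd_conv_nth last_conv_nth)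
  moreover have "distinct es" using simple_path_distinct_edges[OF assms(1)] .
  moreover have "(i + 1) mod (length es + 1) = i + 1" if "i < length es" for i
    using that by simp
  ultimately show ?thesis
    using assms unfolding simple_path_def is_cycle_def
    by (auto simp: nth_append less_Suc_eq insert_commute)
qed

lemma non_cycle_edge_is_bridge:
  assumes "e \<in> E" "\<not> on_cycle E ends e" "ends e = {x, y}" "x \<noteq> y"
  shows "\<not> reach (E - {e}) ends x y"
proof
  assume "reach (E - {e}) ends x y"
  then obtain vs es where "simple_path (E - {e}) ends vs es x y"
    using reach_imp_simple_path by metis
  then have "is_cycle E ends vs (es @ [e])"
    using simple_path_close_cycle[of E e ends vs es x y] assms(1,3,4) by blast
  moreover have "e \<in> set (es @ [e])" by simp
  ultimately show False using assms(2) unfolding on_cycle_def by blast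
qed

lemma simple_path_edge_sides:
  assumes "simple_path E ends vs es u v" "i < length es"
  shows "reach (E - {es ! i}) ends (vs ! i) u" "reach (E - {es ! i}) ends (vs ! Suc i) v"
proof -
  have p: "length vs = length es + 1" "vs ! 0 = u" "vs ! length es = v"
    using assms(1) unfolding simple_path_def by (auto simp: hd_conv_nth last_conv_nth)
  have edges: "es ! k \<in> E - {es ! i} \<and> ends (es ! k) = {vs ! k, vs ! Suc k}"
    if "k < length es" "k \<noteq> i" for k
  proof -
    have "es ! k \<noteq> es ! i"
      using simple_path_distinct_edges[OF assms(1)] assms(2) that by (simp add: nth_eq_iff_index_eq)
    moreover have "es ! k \<in> E" "ends (es ! k) = {vs ! k, vs ! Suc k}"
      using assms(1) that unfolding simple_path_def by auto
    ultimately show ?thesis by simp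
  qed
  have prefix: "reach (E - {es ! i}) ends (vs ! 0) (vs ! i)"
    using assms(2) edges by (intro reach_along_edges[where es = es and hi = i]) auto
  have suffix: "reach (E - {es ! i}) ends (vs ! Suc i) (vs ! length es)"
    using assms(2) edges by (intro reach_along_edges[where es = es and hi = "length es"]) auto
  show "reach (E - {es ! i}) ends (vs ! i) u" "reach (E - {es ! i}) ends (vs ! Suc i) v"
    using reach_sym[OF prefix] suffix p by simp_all
qed

lemma component_with_cycle_reaches_non_cycle_edge:
  assumes "component_has_cycle E' ends c" "E' \<subseteq> E" "\<not> on_cycle E ends e"
    and "\<not> component_has_cycle (E - {e}) ends c"
  shows "\<exists>z\<in>ends e. reach E' ends c z"
proof (rule ccontr)
  assume no_end: "\<not> (\<exists>z\<in>ends e. reach E' ends c z)"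
  obtain cvs ces where cyc: "is_cycle E' ends cvs ces" "\<forall>w\<in>set cvs. reach E' ends c w"
    using assms(1) unfolding component_has_cycle_def by blast
  then have "cvs \<noteq> []" unfolding is_cycle_def by auto
  then have hd: "hd cvs \<in> set cvs" by (rule hd_in_set)
  then have "reach (E' - {e}) ends c (hd cvs)"
    using cyc(2) reach_Diff_or_reach_ends[of E' ends c "hd cvs" e] no_end by blast
  then have "reach (E - {e}) ends c (hd cvs)" by (rule reach_mono) (use assms(2) in blast)
  moreover have "is_cycle (E - {e}) ends cvs ces"
    using is_cycle_Diff_non_cycle_edge[OF is_cycle_mono[OF cyc(1) assms(2)] assms(3)] .
  ultimately show False
    using component_has_cycleI[OF _ hd] assms(4) by blast
qed

lemma not_essential_edgeI:
  assumes "\<not> on_cycle E ends f"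
    and "\<And>a b. ends f = {a, b} \<Longrightarrow> component_has_cycle (E - {f}) ends a \<Longrightarrow>
      component_has_cycle (E - {f}) ends b \<Longrightarrow> reach (E - {f}) ends a b"
  shows "\<not> essential_edge E ends f"
  using assms unfolding essential_edge_def by metis

lemma no_essential_edge_at_acyclic_side:
  assumes e: "e \<in> E" "\<not> on_cycle E ends e" "ends e = {x, y}"
    and acyclic: "\<not> component_has_cycle (E - {e}) ends x"
    and f: "f \<in> E - {e}" "u \<in> ends f" and "reach (E - {e}) ends x u"
  shows "\<not> essential_edge E ends f"
proof -
  have acyclic_from_u: "\<not> component_has_cycle (E - {e}) ends w" if "reach (E - {e}) ends u w" for w
    using that acyclic component_has_cycle_reach reach_trans \<open>reach (E - {e}) ends x u\<close> by metis
  have not_on_cycle: "\<not> on_cycle E ends f"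
  proof
    assume "on_cycle E ends f"
    then obtain cvs ces where cyc: "is_cycle E ends cvs ces" "f \<in> set ces"
      unfolding on_cycle_def by blast
    then have "component_has_cycle (E - {e}) ends u"
      using is_cycle_Diff_non_cycle_edge[OF cyc(1) e(2)] cycle_edge_ends_in_cycle f(2)
        component_has_cycleI reach.reach_refl by metis
    then show False using acyclic_from_u[OF reach.reach_refl] by blast
  qed
  have f_joins_cycle_sides: "reach (E - {f}) ends a b"
    if ab: "ends f = {a, b}" and cycles: "component_has_cycle (E - {f}) ends a"
      "component_has_cycle (E - {f}) ends b" for a b
  proof -
    have "ends f = {b, a}" using ab by (simp add: insert_commute)
    then have "reach (E - {e}) ends a b" "reach (E - {e}) ends b a"
      using reach_edge[of f "E - {e}" ends a b] reach_edge[of f "E - {e}" ends b a] f(1) ab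
      by blast+
    moreover have "u = a \<or> u = b" using f(2) ab by blast
    ultimately have "reach (E - {e}) ends u a" "reach (E - {e}) ends u b"
      using reach.reach_refl by metis+
    then have "\<not> component_has_cycle (E - {e}) ends a" "\<not> component_has_cycle (E - {e}) ends b"
      using acyclic_from_u by blast+
    then obtain za zb where za: "za \<in> ends e" "reach (E - {f}) ends a za"
      and zb: "zb \<in> ends e" "reach (E - {f}) ends b zb"
      using component_with_cycle_reaches_non_cycle_edge[OF cycles(1) _ e(2)]
        component_with_cycle_reaches_non_cycle_edge[OF cycles(2) _ e(2)] by blast
    have "e \<in> E - {f}" using e(1) f(1) by blast
    then have "reach (E - {f}) ends x y" using e(3) reach_edge[of e "E - {f}" ends x y] by blast
    moreover note reach_sym[OF this]
    moreover have "za \<in> {x, y}" "zb \<in> {x, y}" using za(1) zb(1) e(3) by simp_all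
    ultimately have "reach (E - {f}) ends za zb" by (auto intro: reach.reach_refl)
    then show ?thesis using reach_trans[OF reach_trans[OF za(2)] reach_sym[OF zb(2)]] by blast
  qed
  show ?thesis using not_on_cycle f_joins_cycle_sides by (rule not_essential_edgeI)
qed

lemma essential_vertex_side_has_cycle:
  assumes "essential_vertex V E ends u"
    and "e \<in> E" "\<not> on_cycle E ends e" "ends e = {x, y}" "x \<noteq> y"
    and "reach (E - {e}) ends x u"
  shows "component_has_cycle (E - {e}) ends x"
proof (rule ccontr)
  assume "\<not> component_has_cycle (E - {e}) ends x"
  then have "f = e" if "f \<in> E" "essential_edge E ends f" "u \<in> ends f" for f
    using no_essential_edge_at_acyclic_side[OF assms(2-4) _ _ _ assms(6)] that by blast
  then have "{f \<in> E. essential_edge E ends f \<and> u \<in> ends f} \<subseteq> {e}" by blast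
  then have "essential_incidences E ends u \<le> (\<Sum>f\<in>{e}. if ends f = {u} then 2 else 1)"
    unfolding essential_incidences_def by (intro sum_mono2) auto
  also have "\<dots> = 1" using assms(4,5) by auto
  finally show False using assms(1) unfolding essential_vertex_def by simp
qed

theorem lemma5p3:
  fixes V :: "'v set" and E :: "'e set" and ends :: "'e \<Rightarrow> 'v set"
  assumes "multigraph V E ends"
    and "essential_vertex V E ends u" and "essential_vertex V E ends v" and "u \<noteq> v"
    and "simple_path E ends vs es u v"
  shows "\<forall>e\<in>set es. essential_edge E ends e"
proof
  fix e assume "e \<in> set es"
  then obtain i where i: "i < length es" "e = es ! i" by (metis in_set_conv_nth)
  define x y where "x = vs ! i" and "y = vs ! Suc i"
  have e: "e \<in> E" "ends e = {x, y}" "x \<noteq> y"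
    using assms(5) i unfolding simple_path_def x_def y_def by (auto simp: nth_eq_iff_index_eq)
  have sides: "reach (E - {e}) ends x u" "reach (E - {e}) ends y v"
    using simple_path_edge_sides[OF assms(5) i(1)] i(2) x_def y_def by simp_all
  show "essential_edge E ends e"
  proof (cases "on_cycle E ends e")
    case True
    then show ?thesis using e(1) unfolding essential_edge_def by simp
  next
    case False
    have "\<not> reach (E - {e}) ends x y"
      using non_cycle_edge_is_bridge[of e E ends x y] e False by blast
    moreover have "component_has_cycle (E - {e}) ends x"
      using essential_vertex_side_has_cycle[of V E ends u e x y] assms(2) e False sides(1) by blast
    moreover have "component_has_cycle (E - {e}) ends y"
      using essential_vertex_side_has_cycle[of V E ends v e y x] assms(3) e False sides(2)
      by (simp add: insert_commute)
    ultimately show ?thesis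
      using e unfolding essential_edge_def by (intro conjI disjI2 exI[of _ x] exI[of _ y]) simp_all
  qed
qed

end
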